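(* Let $K\in\{\mathbb R,\mathbb C,\mathbb H\}$ and let $(E,d)$ be a metric vector space over $K$ such that $d$ is $C_0$-translation invariant and $(C_1,C_2,C_3)$-lipschitz multiplicative. Let $\delta(x,y)=\lim_{n\to\infty}\frac1n d(nx,ny)$ and $E_0=\{x\in E:\ \delta(ux,0)=0\text{ for all }u\in\mathbb U\}$ (equivalently, the maximal linear subspace of $E$ on which $d$ is bounded). Then $E_0$ is a closed subspace of $E$.
   Context: A metric vector space is a topological vector space over $K$ whose topology is generated by the metric $d$. $\mathbb U=\{u\in K:|u|=1\}$. $d$ is $C_0$-translation invariant if $d(x+z,y+z)\le d(x,y)+C_0$ for all $x,y,z$. $(C_1,C_2,C_3)$-lipschitz multiplicative ($C_1\ge1$, $C_2,C_3\ge0$) means $C_1^{-1}|\lambda|d(x,y)-C_2|\lambda|-C_3\le d(\lambda x,\lambda y)\le C_1|\lambda|d(x,y)+C_2|\lambda|+C_3$ for all $\lambda\in K$, $x,y\in E$. (Under these hypotheses the limit defining $\delta$ exists.) *)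

theory Defs
  imports "HOL-Analysis.Analysis"
begin

text \<open>The scalar field K is modelled by a type of class real_normed_div_algebra
  (a real normed associative division algebra with multiplicative norm); by the
  Frobenius/Mazur/Urbanik-Wright classification these are exactly R, C, H
  (up to isometric isomorphism).\<close>

definition left_vector_space :: "('k::real_normed_div_algebra \<Rightarrow> 'e::ab_group_add \<Rightarrow> 'e) \<Rightarrow> bool" where
  "left_vector_space sc \<longleftrightarrow>
     (\<forall>a x y. sc a (x + y) = sc a x + sc a y) \<and>
     (\<forall>a b x. sc (a + b) x = sc a x + sc b x) \<and>
     (\<forall>a b x. sc (a * b) x = sc a (sc b x)) \<and>
     (\<forall>x. sc 1 x = x)"

definition metric_vector_space ::
  "('k::real_normed_div_algebra \<Rightarrow> 'e::ab_group_add \<Rightarrow> 'e) \<Rightarrow> ('e \<Rightarrow> 'e \<Rightarrow> real) \<Rightarrow> bool" where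
  "metric_vector_space sc d \<longleftrightarrow>
     left_vector_space sc \<and>
     Metric_space UNIV d \<and>
     continuous_map (prod_topology (Metric_space.mtopology UNIV d) (Metric_space.mtopology UNIV d))
        (Metric_space.mtopology UNIV d) (\<lambda>(x, y). x + y) \<and>
     continuous_map (prod_topology (euclidean :: 'k topology) (Metric_space.mtopology UNIV d))
        (Metric_space.mtopology UNIV d) (\<lambda>(a, x). sc a x)"

definition translation_invariant_const :: "real \<Rightarrow> ('e::ab_group_add \<Rightarrow> 'e \<Rightarrow> real) \<Rightarrow> bool" where
  "translation_invariant_const C0 d \<longleftrightarrow> (\<forall>x y z. d (x + z) (y + z) \<le> d x y + C0)"

definition lipschitz_multiplicative ::
  "real \<Rightarrow> real \<Rightarrow> real \<Rightarrow> ('k::real_normed_div_algebra \<Rightarrow> 'e \<Rightarrow> 'e) \<Rightarrow> ('e \<Rightarrow> 'e \<Rightarrow> real) \<Rightarrow> bool" where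
  "lipschitz_multiplicative C1 C2 C3 sc d \<longleftrightarrow>
     C1 \<ge> 1 \<and> C2 \<ge> 0 \<and> C3 \<ge> 0 \<and>
     (\<forall>l x y. norm l * d x y / C1 - C2 * norm l - C3 \<le> d (sc l x) (sc l y) \<and>
              d (sc l x) (sc l y) \<le> C1 * norm l * d x y + C2 * norm l + C3)"

definition asym_dist :: "('k::real_normed_div_algebra \<Rightarrow> 'e \<Rightarrow> 'e) \<Rightarrow> ('e \<Rightarrow> 'e \<Rightarrow> real) \<Rightarrow> 'e \<Rightarrow> 'e \<Rightarrow> real" where
  "asym_dist sc d x y = lim (\<lambda>n. d (sc (of_nat n) x) (sc (of_nat n) y) / real n)"

definition E0 :: "('k::real_normed_div_algebra \<Rightarrow> 'e::ab_group_add \<Rightarrow> 'e) \<Rightarrow> ('e \<Rightarrow> 'e \<Rightarrow> real) \<Rightarrow> 'e set" where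
  "E0 sc d = {x. \<forall>u::'k. norm u = 1 \<longrightarrow> asym_dist sc d (sc u x) 0 = 0}"

definition linear_subspace :: "('k \<Rightarrow> 'e::ab_group_add \<Rightarrow> 'e) \<Rightarrow> 'e set \<Rightarrow> bool" where
  "linear_subspace sc S \<longleftrightarrow> 0 \<in> S \<and> (\<forall>x\<in>S. \<forall>y\<in>S. x + y \<in> S) \<and> (\<forall>a. \<forall>x\<in>S. sc a x \<in> S)"

end

theory Submission
  imports Defs
begin

text \<open>Translation quasi-invariance makes \<open>n \<mapsto> d(n x, 0) + C\<^sub>0\<close> subadditive, so by Fekete's
  lemma the limit \<open>\<delta>(x) = lim d(n x, 0) / n\<close> exists; it is subadditive, homogeneous under
  natural scalars and satisfies \<open>\<delta>(l x) \<le> C\<^sub>1 |l| \<delta>(x)\<close>. The last inequality shows that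
  \<open>E\<^sub>0\<close> is the zero set of \<open>\<delta>\<close>, hence a subspace. For closedness, if \<open>\<delta>(x) = c > 0\<close> pick
  \<open>m\<close> with \<open>m c > C\<^sub>1 + C\<^sub>2\<close>; continuity of \<open>y \<mapsto> m y\<close> keeps \<open>d(m x, m y) < 1\<close> for \<open>y\<close> near
  \<open>x\<close>, and the Lipschitz bound \<open>\<delta>(m x) \<le> C\<^sub>1 d(m x, m y) + C\<^sub>2 + \<delta>(m y)\<close> then forces
  \<open>\<delta>(y) > 0\<close>.\<close>

lemma subadditive_le_multiple:
  fixes b :: "nat \<Rightarrow> real"
  assumes sub: "\<And>m n. b (m + n) \<le> b m + b n"
  shows "b (q * k + r) \<le> real q * b k + b r"
proof (induction q)
  case 0
  then show ?case by simp
next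
  case (Suc q)
  have "b (Suc q * k + r) = b (k + (q * k + r))" by (simp add: algebra_simps)
  also have "\<dots> \<le> b k + b (q * k + r)" by (rule sub)
  also have "\<dots> \<le> b k + (real q * b k + b r)" using Suc by simp
  finally show ?case by (simp add: algebra_simps)
qed

lemma subadditive_quotient_le:
  fixes b :: "nat \<Rightarrow> real"
  assumes sub: "\<And>m n. b (m + n) \<le> b m + b n" and nonneg: "\<And>n. b n \<ge> 0"
    and "k \<ge> 1" and "n \<ge> 1"
  shows "b n / real n \<le> b k / real k + Max (b ` {..<k}) / real n"
proof -
  define q r where "q = n div k" and "r = n mod k"
  have n_eq: "n = q * k + r" by (simp add: q_def r_def)
  have "r < k" using \<open>k \<ge> 1\<close> by (simp add: r_def)
  then have "b r \<le> Max (b ` {..<k})" by simp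
  moreover have "b n \<le> real q * b k + b r"
    using subadditive_le_multiple[of b q k r, OF sub] n_eq by simp
  moreover have "real q * b k = (real q * real k) * (b k / real k)" using \<open>k \<ge> 1\<close> by simp
  moreover have "(real q * real k) * (b k / real k) \<le> real n * (b k / real k)"
    using n_eq nonneg[of k] by (intro mult_right_mono) (simp_all flip: of_nat_mult)
  ultimately have "b n \<le> real n * (b k / real k) + Max (b ` {..<k})" by linarith
  then show ?thesis using \<open>n \<ge> 1\<close> by (simp add: field_simps)
qed

lemma subadditive_quotient_tendsto_Inf:
  fixes b :: "nat \<Rightarrow> real"
  assumes sub: "\<And>m n. b (m + n) \<le> b m + b n" and nonneg: "\<And>n. b n \<ge> 0"
  shows "(\<lambda>n. b n / real n) \<longlonglongrightarrow> Inf ((\<lambda>n. b n / real n) ` {1..})"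
    (is "_ \<longlonglongrightarrow> Inf ?S")
proof (rule order_tendstoI)
  have Inf_le: "Inf ?S \<le> b n / real n" if "n \<ge> 1" for n
    using that nonneg by (intro cInf_lower bdd_belowI[of _ 0]) auto
  fix a assume "a < Inf ?S"
  then show "\<forall>\<^sub>F n in sequentially. a < b n / real n"
    using Inf_le by (auto simp: eventually_at_top_linorder intro: less_le_trans)
next
  fix a assume "Inf ?S < a"
  then obtain k where "k \<ge> 1" and k: "b k / real k < a"
    using cInf_lessD[of ?S a] by auto
  have "\<forall>\<^sub>F n in sequentially. Max (b ` {..<k}) / real n < a - b k / real k"
    using k by (intro order_tendstoD(2)[OF lim_const_over_n]) simp
  moreover have "\<forall>\<^sub>F n in sequentially. n \<ge> 1" by (rule eventually_ge_at_top)
  ultimately show "\<forall>\<^sub>F n in sequentially. b n / real n < a"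
  proof eventually_elim
    case (elim n)
    then show ?case
      using subadditive_quotient_le[OF sub nonneg \<open>k \<ge> 1\<close>, of n] by linarith
  qed
qed

locale quasi_invariant_metric_space = Metric_space "UNIV :: 'e set" d
  for d :: "'e::ab_group_add \<Rightarrow> 'e \<Rightarrow> real" +
  fixes sc :: "'k::real_normed_div_algebra \<Rightarrow> 'e \<Rightarrow> 'e" and C0 :: real
  assumes left_vector_space: "left_vector_space sc"
    and translation_invariant: "translation_invariant_const C0 d"
begin

lemma scale_add_right: "sc a (x + y) = sc a x + sc a y"
  and scale_add_left: "sc (a + b) x = sc a x + sc b x"
  and scale_scale: "sc (a * b) x = sc a (sc b x)"
  using left_vector_space by (simp_all add: left_vector_space_def)

lemma scale_zero_right [simp]: "sc a 0 = 0"
  using scale_add_right[of a 0 0] by simp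

lemma scale_zero_left [simp]: "sc 0 x = 0"
  using scale_add_left[of 0 0 x] by simp

lemma dist_add_translate_le: "d (x + z) (y + z) \<le> d x y + C0"
  using translation_invariant by (simp add: translation_invariant_const_def)

lemma C0_nonneg: "C0 \<ge> 0"
  using dist_add_translate_le[of 0 0 0] by simp

lemma dist_add_zero_le: "d (x + y) 0 \<le> d x 0 + d y 0 + C0"
proof -
  have "d (x + y) 0 \<le> d (x + y) (0 + y) + d (0 + y) 0"
    by (rule triangle) simp_all
  also have "\<dots> \<le> d x 0 + C0 + d y 0"
    using dist_add_translate_le[of x y 0] by simp
  finally show ?thesis by simp
qed

abbreviation asym_norm :: "'e \<Rightarrow> real" where
  "asym_norm x \<equiv> asym_dist sc d x 0"

lemma asym_norm_LIMSEQ: "(\<lambda>n. d (sc (of_nat n) x) 0 / real n) \<longlonglongrightarrow> asym_norm x"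
proof -
  define b where "b n = d (sc (of_nat n) x) 0 + C0" for n
  have "(\<lambda>n. b n / real n) \<longlonglongrightarrow> Inf ((\<lambda>n. b n / real n) ` {1..})"
  proof (rule subadditive_quotient_tendsto_Inf)
    show "b (m + n) \<le> b m + b n" for m n
      using dist_add_zero_le[of "sc (of_nat m) x" "sc (of_nat n) x"]
      by (simp add: b_def scale_add_left)
    show "b n \<ge> 0" for n
      using C0_nonneg by (simp add: b_def)
  qed
  from tendsto_diff[OF this lim_const_over_n[of C0]]
  have "(\<lambda>n. d (sc (of_nat n) x) 0 / real n) \<longlonglongrightarrow> Inf ((\<lambda>n. b n / real n) ` {1..})"
    by (simp add: b_def add_divide_distrib)
  then show ?thesis
    by (simp add: asym_dist_def limI)
qed

lemma asym_norm_nonneg: "asym_norm x \<ge> 0"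
  by (rule LIMSEQ_le_const[OF asym_norm_LIMSEQ]) simp

lemma asym_norm_zero [simp]: "asym_norm 0 = 0"
  by (simp add: asym_dist_def)

lemma asym_norm_add_le: "asym_norm (x + y) \<le> asym_norm x + asym_norm y"
proof (rule LIMSEQ_le[OF asym_norm_LIMSEQ])
  show "(\<lambda>n. d (sc (of_nat n) x) 0 / real n + d (sc (of_nat n) y) 0 / real n + C0 / real n)
      \<longlonglongrightarrow> asym_norm x + asym_norm y"
    using tendsto_add[OF tendsto_add[OF asym_norm_LIMSEQ asym_norm_LIMSEQ] lim_const_over_n]
    by simp
  show "\<exists>N. \<forall>n\<ge>N. d (sc (of_nat n) (x + y)) 0 / real n
      \<le> d (sc (of_nat n) x) 0 / real n + d (sc (of_nat n) y) 0 / real n + C0 / real n"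
    by (auto simp: scale_add_right dist_add_zero_le divide_right_mono simp flip: add_divide_distrib)
qed

lemma asym_norm_scale_of_nat: "asym_norm (sc (of_nat m) x) = real m * asym_norm x"
proof (cases "m = 0")
  case False
  have "strict_mono (\<lambda>n. n * m)"
    using False by (simp add: strict_mono_def)
  from tendsto_mult_left[OF LIMSEQ_subseq_LIMSEQ[OF asym_norm_LIMSEQ this], of "real m"]
  have "(\<lambda>n. d (sc (of_nat n) (sc (of_nat m) x)) 0 / real n) \<longlonglongrightarrow> real m * asym_norm x"
    using False by (simp add: o_def flip: scale_scale)
  then show ?thesis
    using asym_norm_LIMSEQ LIMSEQ_unique by blast
qed simp

end

locale lipschitz_quasi_invariant_metric_space = quasi_invariant_metric_space d sc C0
  for d :: "'e::ab_group_add \<Rightarrow> 'e \<Rightarrow> real"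
    and sc :: "'k::real_normed_div_algebra \<Rightarrow> 'e \<Rightarrow> 'e" and C0 :: real +
  fixes C1 C2 C3 :: real
  assumes lipschitz: "lipschitz_multiplicative C1 C2 C3 sc d"
begin

lemma C1_ge_1: "C1 \<ge> 1"
  using lipschitz by (simp add: lipschitz_multiplicative_def)

lemma dist_scale_le: "d (sc l x) (sc l y) \<le> C1 * norm l * d x y + C2 * norm l + C3"
  using lipschitz by (simp add: lipschitz_multiplicative_def)

lemma asym_norm_scale_le: "asym_norm (sc l x) \<le> C1 * norm l * asym_norm x"
proof (rule LIMSEQ_le[OF asym_norm_LIMSEQ])
  show "(\<lambda>n. C1 * norm l * (d (sc (of_nat n) x) 0 / real n) + (C2 * norm l + C3) / real n)
      \<longlonglongrightarrow> C1 * norm l * asym_norm x"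
    using tendsto_add[OF tendsto_mult_left[OF asym_norm_LIMSEQ] lim_const_over_n] by simp
  have "d (sc (of_nat n) (sc l x)) 0 \<le> C1 * norm l * d (sc (of_nat n) x) 0 + (C2 * norm l + C3)"
    for n :: nat
    using dist_scale_le[of l "sc (of_nat n) x" 0]
    by (simp flip: scale_scale add: mult_of_nat_commute)
  then show "\<exists>N. \<forall>n\<ge>N. d (sc (of_nat n) (sc l x)) 0 / real n
      \<le> C1 * norm l * (d (sc (of_nat n) x) 0 / real n) + (C2 * norm l + C3) / real n"
    by (simp add: divide_right_mono flip: add_divide_distrib)
qed

lemma asym_norm_le_dist: "asym_norm x \<le> C1 * d x y + C2 + asym_norm y"
proof (rule LIMSEQ_le[OF asym_norm_LIMSEQ])
  show "(\<lambda>n. C1 * d x y + C2 + C3 / real n + d (sc (of_nat n) y) 0 / real n)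
      \<longlonglongrightarrow> C1 * d x y + C2 + asym_norm y"
    using tendsto_add[OF tendsto_add[OF tendsto_const lim_const_over_n] asym_norm_LIMSEQ] by simp
  have "d (sc (of_nat n) x) 0 / real n
      \<le> C1 * d x y + C2 + C3 / real n + d (sc (of_nat n) y) 0 / real n" if "n \<ge> 1" for n
  proof -
    have "d (sc (of_nat n) x) 0
        \<le> C1 * real n * d x y + C2 * real n + C3 + d (sc (of_nat n) y) 0"
      using triangle[of "sc (of_nat n) x" "sc (of_nat n) y" 0] dist_scale_le[of "of_nat n" x y]
      by simp
    then have "d (sc (of_nat n) x) 0 / real n
        \<le> (C1 * real n * d x y + C2 * real n + C3 + d (sc (of_nat n) y) 0) / real n"
      by (simp add: divide_right_mono)
    also have "\<dots> = C1 * d x y + C2 + C3 / real n + d (sc (of_nat n) y) 0 / real n"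
      using that by (simp add: add_divide_distrib)
    finally show ?thesis .
  qed
  then show "\<exists>N. \<forall>n\<ge>N. d (sc (of_nat n) x) 0 / real n
      \<le> C1 * d x y + C2 + C3 / real n + d (sc (of_nat n) y) 0 / real n"
    by blast
qed

lemma E0_eq_asym_norm_zero: "E0 sc d = {x. asym_norm x = 0}"
proof (intro set_eqI iffI)
  fix x assume "x \<in> E0 sc d"
  moreover have "sc 1 x = x"
    using left_vector_space by (simp add: left_vector_space_def)
  ultimately show "x \<in> {x. asym_norm x = 0}"
    by (auto simp: E0_def dest: spec[of _ 1])
next
  fix x assume "x \<in> {x. asym_norm x = 0}"
  then have "asym_norm (sc u x) = 0" if "norm u = 1" for u
    using asym_norm_scale_le[of u x] asym_norm_nonneg[of "sc u x"] that by simp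
  then show "x \<in> E0 sc d"
    by (simp add: E0_def)
qed

lemma linear_subspace_asym_norm_zero: "linear_subspace sc {x. asym_norm x = 0}"
  unfolding linear_subspace_def
proof (intro conjI ballI allI)
  fix x y assume "x \<in> {x. asym_norm x = 0}" "y \<in> {x. asym_norm x = 0}"
  then show "x + y \<in> {x. asym_norm x = 0}"
    using asym_norm_add_le[of x y] asym_norm_nonneg[of "x + y"] by simp
next
  fix a x assume "x \<in> {x. asym_norm x = 0}"
  then show "sc a x \<in> {x. asym_norm x = 0}"
    using asym_norm_scale_le[of a x] asym_norm_nonneg[of "sc a x"] by simp
qed simp

lemma closedin_asym_norm_zero:
  assumes continuous_scale: "\<And>a. continuous_map mtopology mtopology (sc a)"
  shows "closedin mtopology {x. asym_norm x = 0}"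
  unfolding closedin_metric
proof (intro conjI allI impI)
  fix x assume "x \<in> UNIV - {x. asym_norm x = 0}"
  then have pos: "asym_norm x > 0"
    using asym_norm_nonneg[of x] by simp
  obtain m :: nat where "real m > (C1 + C2) / asym_norm x"
    using reals_Archimedean2 by blast
  then have m: "real m * asym_norm x > C1 + C2"
    using pos by (simp add: field_simps)
  let ?m = "of_nat m :: 'k"
  have "openin mtopology {y. sc ?m y \<in> mball (sc ?m x) 1}"
    using openin_continuous_map_preimage[OF continuous_scale openin_mball] by (simp add: vimage_def)
  moreover have "x \<in> {y. sc ?m y \<in> mball (sc ?m x) 1}"
    by simp
  ultimately obtain r where "r > 0" and r: "mball x r \<subseteq> {y. sc ?m y \<in> mball (sc ?m x) 1}"
    unfolding openin_mtopology by blast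
  have "asym_norm y \<noteq> 0" if "y \<in> mball x r" for y
  proof
    assume "asym_norm y = 0"
    have "real m * asym_norm x \<le> C1 * d (sc ?m x) (sc ?m y) + C2 + real m * asym_norm y"
      using asym_norm_le_dist[of "sc ?m x" "sc ?m y"] by (simp add: asym_norm_scale_of_nat)
    also have "\<dots> < C1 + C2"
      using r that C1_ge_1 \<open>asym_norm y = 0\<close> by auto
    finally show False
      using m by simp
  qed
  then show "\<exists>r>0. disjnt {x. asym_norm x = 0} (mball x r)"
    using \<open>r > 0\<close> by (auto simp: disjnt_def)
qed simp

end

theorem proposition5:
  fixes sc :: "'k::real_normed_div_algebra \<Rightarrow> 'e::ab_group_add \<Rightarrow> 'e"
    and d :: "'e \<Rightarrow> 'e \<Rightarrow> real"
    and C0 C1 C2 C3 :: real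
  assumes "metric_vector_space sc d"
    and "translation_invariant_const C0 d"
    and "lipschitz_multiplicative C1 C2 C3 sc d"
  shows "linear_subspace sc (E0 sc d) \<and> closedin (Metric_space.mtopology UNIV d) (E0 sc d)"
proof -
  have "left_vector_space sc" and "Metric_space UNIV d"
    and continuous_scale: "continuous_map (prod_topology (euclidean :: 'k topology)
        (Metric_space.mtopology UNIV d)) (Metric_space.mtopology UNIV d) (\<lambda>(a, x). sc a x)"
    using assms(1) by (auto simp: metric_vector_space_def)
  then interpret lipschitz_quasi_invariant_metric_space d sc C0 C1 C2 C3
    using assms(2,3)
    by (intro lipschitz_quasi_invariant_metric_space.intro quasi_invariant_metric_space.intro
        quasi_invariant_metric_space_axioms.intro lipschitz_quasi_invariant_metric_space_axioms.intro)
  have "continuous_map mtopology mtopology (sc a)" for a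
    using continuous_map_compose[OF continuous_map_pairedI[OF continuous_map_const[THEN iffD2]
          continuous_map_id] continuous_scale]
    by (simp add: o_def)
  then show ?thesis
    by (simp add: E0_eq_asym_norm_zero linear_subspace_asym_norm_zero closedin_asym_norm_zero)
qed

end
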